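(* Let $n,k,d\in\mathbb N$ satisfy $n\ge 60k$ and $k\ge 4d$. Let $T$ be a tree with $n$ vertices and at most $n/(5d)$ leaves. Then $T$ contains either a $2d$-separated set of at least $n/(40k)$ leaves, or a collection of at least $n/(40k)$ vertex-disjoint bare paths each of length $k$.
   Context: A path with $\ell$ vertices has length $\ell-1$. A bare path in a tree $T$ is a path in $T$ all of whose interior vertices have degree exactly $2$ in $T$. A vertex set $Q$ is $k$-separated in $T$ if every two distinct vertices of $Q$ are at distance at least $k$ in $T$. *)

theory Defs
  imports Complex_Main
begin

definition graph :: "'a set \<Rightarrow> 'a set set \<Rightarrow> bool" where
  "graph V E \<longleftrightarrow> finite V \<and> (\<forall>e\<in>E. \<exists>u v. e = {u, v} \<and> u \<noteq> v \<and> u \<in> V \<and> v \<in> V)"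

definition adj :: "'a set set \<Rightarrow> 'a \<Rightarrow> 'a \<Rightarrow> bool" where
  "adj E u v \<longleftrightarrow> {u, v} \<in> E \<and> u \<noteq> v"

definition is_path :: "'a set \<Rightarrow> 'a set set \<Rightarrow> 'a list \<Rightarrow> bool" where
  "is_path V E p \<longleftrightarrow> p \<noteq> [] \<and> distinct p \<and> set p \<subseteq> V \<and>
     (\<forall>i. Suc i < length p \<longrightarrow> adj E (p ! i) (p ! Suc i))"

definition path_len :: "'a list \<Rightarrow> nat" where
  "path_len p = length p - 1"

definition is_cycle :: "'a set \<Rightarrow> 'a set set \<Rightarrow> 'a list \<Rightarrow> bool" where
  "is_cycle V E c \<longleftrightarrow> length c \<ge> 3 \<and> is_path V E c \<and> adj E (last c) (hd c)"

definition connected_graph :: "'a set \<Rightarrow> 'a set set \<Rightarrow> bool" where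
  "connected_graph V E \<longleftrightarrow>
     (\<forall>u\<in>V. \<forall>v\<in>V. \<exists>p. is_path V E p \<and> hd p = u \<and> last p = v)"

definition tree :: "'a set \<Rightarrow> 'a set set \<Rightarrow> bool" where
  "tree V E \<longleftrightarrow> graph V E \<and> V \<noteq> {} \<and> connected_graph V E \<and> (\<nexists>c. is_cycle V E c)"

definition degree :: "'a set set \<Rightarrow> 'a \<Rightarrow> nat" where
  "degree E v = card {e \<in> E. v \<in> e}"

definition leaves :: "'a set \<Rightarrow> 'a set set \<Rightarrow> 'a set" where
  "leaves V E = {v \<in> V. degree E v = 1}"

definition gdist :: "'a set \<Rightarrow> 'a set set \<Rightarrow> 'a \<Rightarrow> 'a \<Rightarrow> nat" where
  "gdist V E u v = (LEAST l. \<exists>p. is_path V E p \<and> hd p = u \<and> last p = v \<and> path_len p = l)"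

definition separated :: "'a set \<Rightarrow> 'a set set \<Rightarrow> nat \<Rightarrow> 'a set \<Rightarrow> bool" where
  "separated V E k Q \<longleftrightarrow> (\<forall>u\<in>Q. \<forall>v\<in>Q. u \<noteq> v \<longrightarrow> gdist V E u v \<ge> k)"

definition bare_path :: "'a set \<Rightarrow> 'a set set \<Rightarrow> 'a list \<Rightarrow> bool" where
  "bare_path V E p \<longleftrightarrow> is_path V E p \<and>
     (\<forall>i. 0 < i \<and> i < length p - 1 \<longrightarrow> degree E (p ! i) = 2)"

end

theory Submission
  imports Defs
begin

text \<open>
  Root the tree at a leaf r and choose a set Q of leaves that is maximal among the
  2d-separated ones for the distance in the tree. If Q is large we are done. Otherwise
  every leaf is within distance 2d of Q, and every vertex w falls into one of four classes:
  (1) w is at most 2d levels above a leaf; (2) w is at most 2d levels above an end or a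
  branch vertex of the subtree spanned by Q and r; (3) w lies in that subtree less than
  k + 2d levels below one of its branch vertices or below r; (4) w and its first k
  ancestors all have degree 2. A vertex outside (1) to (3) whose path upwards hits a vertex
  of degree other than 2 would find there a side branch containing only leaves close to Q,
  which forces it into (2) or (3).

  The spanned subtree has at most |Q| ends and fewer branch vertices, so classes (2) and (3)
  have at most 4k|Q| < n/10 vertices, and class (1) has at most 2d n/(5d) = 2n/5. Hence more
  than n/2 vertices lie in class (4). Each of them starts an upward bare path of length k,
  and the vertices whose depths agree modulo k + 1 start pairwise disjoint paths.
\<close>

lemma funpow_apply_add: "(f ^^ m) ((f ^^ n) x) = (f ^^ (m + n)) x"
  by (simp add: funpow_add)

lemma funpow_apply_Suc: "(f ^^ m) (f x) = (f ^^ Suc m) x"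
  by (simp add: funpow_swap1)

lemma apply_funpow_pred: "1 \<le> m \<Longrightarrow> f ((f ^^ (m - 1)) x) = (f ^^ m) x"
  by (cases m) simp_all

lemma exists_maximal_separated_subset:
  fixes \<delta> :: "'a \<Rightarrow> 'a \<Rightarrow> nat"
  assumes "finite L" "L \<noteq> {}" and sym: "\<And>u v. \<delta> u v = \<delta> v u"
  shows "\<exists>Q\<subseteq>L. Q \<noteq> {} \<and> (\<forall>u\<in>Q. \<forall>v\<in>Q. u \<noteq> v \<longrightarrow> m \<le> \<delta> u v)
    \<and> (\<forall>l\<in>L - Q. \<exists>q\<in>Q. \<delta> l q < m)"
proof -
  define F where "F = {Q. Q \<subseteq> L \<and> (\<forall>u\<in>Q. \<forall>v\<in>Q. u \<noteq> v \<longrightarrow> m \<le> \<delta> u v)}"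
  obtain x where "x \<in> L" using assms(2) by blast
  then have "{x} \<in> F" unfolding F_def by simp
  have "finite F" by (rule finite_subset[of _ "Pow L"]) (use assms(1) in \<open>auto simp: F_def\<close>)
  have "Max (card ` F) \<in> card ` F" using \<open>finite F\<close> \<open>{x} \<in> F\<close> by (intro Max_in) auto
  then obtain Q where "Q \<in> F" "card Q = Max (card ` F)" by force
  then have Q: "Q \<subseteq> L" "\<forall>u\<in>Q. \<forall>v\<in>Q. u \<noteq> v \<longrightarrow> m \<le> \<delta> u v"
    and max: "\<forall>Q'\<in>F. card Q' \<le> card Q"
    using Max_ge[of "card ` F"] \<open>finite F\<close> unfolding F_def by auto
  have "finite Q" using Q(1) assms(1) finite_subset by blast
  have "Q \<noteq> {}" using max \<open>{x} \<in> F\<close> by fastforce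
  moreover have "\<exists>q\<in>Q. \<delta> l q < m" if "l \<in> L - Q" for l
  proof (rule ccontr)
    assume "\<not> (\<exists>q\<in>Q. \<delta> l q < m)"
    then have "insert l Q \<in> F" using Q that sym unfolding F_def by (auto simp: not_less)
    then show False using max \<open>finite Q\<close> that by fastforce
  qed
  ultimately show ?thesis using Q by blast
qed

lemma exists_large_residue_class:
  assumes "finite Y" "0 < m"
  shows "\<exists>c<m. card Y \<le> m * card {y \<in> Y. f y mod m = c}"
proof -
  define cls where "cls c = {y \<in> Y. f y mod m = c}" for c
  define M where "M = Max ((\<lambda>c. card (cls c)) ` {..<m})"
  have "M \<in> (\<lambda>c. card (cls c)) ` {..<m}" unfolding M_def using assms(2) by (intro Max_in) auto
  then obtain c where c: "c < m" "card (cls c) = M" by auto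
  have "Y = (\<Union>c'<m. cls c')" unfolding cls_def using assms(2) by auto
  then have "card Y \<le> (\<Sum>c'<m. card (cls c'))" using card_UN_le[of "{..<m}" cls] by simp
  also have "\<dots> \<le> m * M" using sum_bounded_above[of "{..<m}" "\<lambda>c'. card (cls c')" M] unfolding M_def by simp
  finally show ?thesis using c unfolding cls_def by blast
qed

lemma eq_0_if_mod_eq_diff: "x < m \<Longrightarrow> x \<le> n \<Longrightarrow> (n - x) mod m = n mod m \<Longrightarrow> (x::nat) = 0"
  using mod_eq_dvd_iff_nat[of "n - x" n m] dvd_imp_le[of m x] by auto

lemma is_path_iff_successively:
  "is_path V E p \<longleftrightarrow> p \<noteq> [] \<and> distinct p \<and> set p \<subseteq> V \<and> successively (adj E) p"
  unfolding is_path_def successively_conv_nth by auto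

lemma adj_sym: "adj E u v \<Longrightarrow> adj E v u"
  unfolding adj_def by (auto simp: insert_commute)

lemma adj_in_vertices: "graph V E \<Longrightarrow> adj E u v \<Longrightarrow> u \<in> V \<and> v \<in> V"
  unfolding graph_def adj_def by (auto simp: doubleton_eq_iff)

lemma is_path_adj_nth: "is_path V E p \<Longrightarrow> Suc i < length p \<Longrightarrow> adj E (p ! i) (p ! Suc i)"
  unfolding is_path_def by blast

lemma is_path_take: "is_path V E p \<Longrightarrow> 0 < m \<Longrightarrow> is_path V E (take m p)"
  unfolding is_path_def by (auto dest: in_set_takeD)

lemma is_path_snoc:
  "is_path V E p \<Longrightarrow> v \<in> V \<Longrightarrow> v \<notin> set p \<Longrightarrow> adj E (last p) v \<Longrightarrow> is_path V E (p @ [v])"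
  unfolding is_path_iff_successively by (auto simp: successively_append_iff)

lemma is_path_rev: "is_path V E p \<Longrightarrow> is_path V E (rev p)"
  unfolding is_path_iff_successively by (auto simp: successively_rev intro: successively_mono adj_sym)

lemma shortest_path_exists:
  assumes "connected_graph V E" "u \<in> V" "v \<in> V"
  shows "\<exists>p. is_path V E p \<and> hd p = u \<and> last p = v \<and> path_len p = gdist V E u v"
proof -
  from assms obtain p where "is_path V E p \<and> hd p = u \<and> last p = v"
    unfolding connected_graph_def by blast
  then have "\<exists>l p. is_path V E p \<and> hd p = u \<and> last p = v \<and> path_len p = l" by blast
  then show ?thesis unfolding gdist_def by (rule LeastI_ex)
qed

lemma gdist_le_path_len:
  "is_path V E p \<Longrightarrow> hd p = u \<Longrightarrow> last p = v \<Longrightarrow> gdist V E u v \<le> path_len p"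
  unfolding gdist_def by (rule Least_le) blast

lemma gdist_self: "v \<in> V \<Longrightarrow> gdist V E v v = 0"
  using gdist_le_path_len[of V E "[v]" v v] by (simp add: is_path_def path_len_def)

lemma gdist_le_prefix:
  assumes "is_path V E p" "hd p = u" "i < length p"
  shows "gdist V E u (p ! i) \<le> i"
proof -
  have "gdist V E u (p ! i) \<le> path_len (take (Suc i) p)"
  proof (rule gdist_le_path_len)
    show "is_path V E (take (Suc i) p)" using assms(1) by (rule is_path_take) simp
    show "hd (take (Suc i) p) = u" using assms by simp
    show "last (take (Suc i) p) = p ! i" using assms(3) by (simp add: take_Suc_conv_app_nth)
  qed
  then show ?thesis using assms(3) by (simp add: path_len_def)
qed

lemma gdist_adj_le:
  assumes G: "graph V E" "connected_graph V E" and "r \<in> V" "adj E u v"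
  shows "gdist V E r v \<le> Suc (gdist V E r u)"
proof -
  have V: "u \<in> V" "v \<in> V" using adj_in_vertices[OF G(1) assms(4)] by auto
  obtain p where p: "is_path V E p" "hd p = r" "last p = u" "path_len p = gdist V E r u"
    using shortest_path_exists[OF G(2) \<open>r \<in> V\<close> V(1)] by blast
  have "p \<noteq> []" using p(1) unfolding is_path_def by simp
  show ?thesis
  proof (cases "v \<in> set p")
    case True
    then obtain i where "i < length p" "p ! i = v" by (metis in_set_conv_nth)
    then show ?thesis using gdist_le_prefix[OF p(1,2)] p(4) unfolding path_len_def by fastforce
  next
    case False
    then have "gdist V E r v \<le> path_len (p @ [v])"
      using p assms(4) V \<open>p \<noteq> []\<close> by (intro gdist_le_path_len is_path_snoc) auto
    then show ?thesis using p(4) \<open>p \<noteq> []\<close> unfolding path_len_def by simp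
  qed
qed

lemma gdist_predecessor:
  assumes G: "graph V E" "connected_graph V E" and "r \<in> V" "v \<in> V" "v \<noteq> r"
  shows "\<exists>u. adj E v u \<and> Suc (gdist V E r u) = gdist V E r v"
proof -
  obtain p where p: "is_path V E p" "hd p = r" "last p = v" "path_len p = gdist V E r v"
    using shortest_path_exists[OF G(2) assms(3,4)] by blast
  have "p \<noteq> []" using p(1) unfolding is_path_def by simp
  have len: "2 \<le> length p"
  proof (rule ccontr)
    assume "\<not> 2 \<le> length p"
    then have "length p = 1" using \<open>p \<noteq> []\<close> by (simp add: not_le less_2_cases_iff)
    then have "hd p = last p" by (cases p) auto
    then show False using p(2,3) assms(5) by simp
  qed
  define u where "u = p ! (length p - 2)"
  have "Suc (length p - 2) = length p - 1" using len by simp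
  then have "last p = p ! Suc (length p - 2)" using \<open>p \<noteq> []\<close> by (simp add: last_conv_nth)
  then have "adj E u v"
    using is_path_adj_nth[OF p(1), of "length p - 2"] p(3) len unfolding u_def by simp
  moreover have "gdist V E r u \<le> length p - 2" using gdist_le_prefix[OF p(1,2), of "length p - 2"] len unfolding u_def by simp
  moreover have "gdist V E r v \<le> Suc (gdist V E r u)" using gdist_adj_le[OF G assms(3) \<open>adj E u v\<close>] .
  ultimately have "Suc (gdist V E r u) = gdist V E r v" using p(4) len unfolding path_len_def by linarith
  then show ?thesis using adj_sym[OF \<open>adj E u v\<close>] by blast
qed

section \<open>Parent functions of breadth-first search trees\<close>

locale bfs_parent =
  fixes V :: "'a set" and E :: "'a set set" and r :: 'a
    and par :: "'a \<Rightarrow> 'a" and dep :: "'a \<Rightarrow> nat"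
  assumes finite_V: "finite V" and root_in_V: "r \<in> V"
    and par_root: "par r = r" and dep_root: "dep r = 0"
    and par_in_V: "v \<in> V \<Longrightarrow> par v \<in> V"
    and adj_par: "v \<in> V \<Longrightarrow> v \<noteq> r \<Longrightarrow> adj E v (par v)"
    and dep_par: "v \<in> V \<Longrightarrow> v \<noteq> r \<Longrightarrow> dep v = Suc (dep (par v))"
    and dep_adj_le: "adj E u v \<Longrightarrow> dep v \<le> Suc (dep u)"
    and adj_in_V: "adj E u v \<Longrightarrow> u \<in> V \<and> v \<in> V"
begin

lemma root_if_dep_0: "v \<in> V \<Longrightarrow> dep v = 0 \<Longrightarrow> v = r"
  using dep_par by fastforce

lemma funpow_par_in_V: "v \<in> V \<Longrightarrow> (par ^^ m) v \<in> V"
  by (induction m) (auto simp: par_in_V)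

lemma dep_funpow_par: "v \<in> V \<Longrightarrow> dep ((par ^^ m) v) = dep v - m"
proof (induction m)
  case (Suc m)
  then show ?case
    using dep_par[OF funpow_par_in_V[OF Suc.prems]] par_root dep_root
    by (cases "(par ^^ m) v = r") auto
qed simp

lemma funpow_par_root [simp]: "(par ^^ m) r = r"
  by (induction m) (simp_all add: par_root)

lemma funpow_par_eq_root: "v \<in> V \<Longrightarrow> dep v \<le> m \<Longrightarrow> (par ^^ m) v = r"
  using root_if_dep_0[OF funpow_par_in_V] dep_funpow_par by simp

lemma funpow_par_neq_root: "v \<in> V \<Longrightarrow> m < dep v \<Longrightarrow> (par ^^ m) v \<noteq> r"
  using dep_funpow_par dep_root by fastforce

lemma less_dep_if_funpow_par_neq_root: "u \<in> V \<Longrightarrow> (par ^^ m) u \<noteq> r \<Longrightarrow> m < dep u"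
  using funpow_par_eq_root by (meson not_less)

lemma adj_funpow_par: "v \<in> V \<Longrightarrow> m < dep v \<Longrightarrow> adj E ((par ^^ m) v) ((par ^^ Suc m) v)"
  using adj_par[OF funpow_par_in_V funpow_par_neq_root] by simp

lemma funpow_par_inj: "v \<in> V \<Longrightarrow> a \<le> dep v \<Longrightarrow> b \<le> dep v \<Longrightarrow> (par ^^ a) v = (par ^^ b) v \<Longrightarrow> a = b"
  using dep_funpow_par by (metis diff_diff_cancel)

definition ancestor_path :: "'a \<Rightarrow> nat \<Rightarrow> 'a list" where
  "ancestor_path v m = map (\<lambda>i. (par ^^ i) v) [0..<Suc m]"

lemma length_ancestor_path [simp]: "length (ancestor_path v m) = Suc m"
  unfolding ancestor_path_def by simp

lemma ancestor_path_not_Nil [simp]: "ancestor_path v m \<noteq> []"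
  unfolding ancestor_path_def by simp

lemma nth_ancestor_path [simp]: "i \<le> m \<Longrightarrow> ancestor_path v m ! i = (par ^^ i) v"
  unfolding ancestor_path_def by (simp del: upt_Suc add: nth_upt less_Suc_eq_le)

lemma set_ancestor_path: "set (ancestor_path v m) = {(par ^^ i) v | i. i \<le> m}"
  unfolding ancestor_path_def by (auto simp del: upt_Suc simp: less_Suc_eq_le)

lemma hd_ancestor_path [simp]: "hd (ancestor_path v m) = v"
  unfolding ancestor_path_def by (simp del: upt_Suc add: hd_map)

lemma last_ancestor_path [simp]: "last (ancestor_path v m) = (par ^^ m) v"
  unfolding ancestor_path_def by (simp add: last_map)

lemma is_path_ancestor_path:
  assumes "v \<in> V" "m \<le> dep v"
  shows "is_path V E (ancestor_path v m)"
  unfolding is_path_def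
proof (intro conjI allI impI)
  have "inj_on (\<lambda>i. (par ^^ i) v) {0..<Suc m}"
    using funpow_par_inj[OF assms(1)] assms(2) by (auto intro: inj_onI)
  then show "distinct (ancestor_path v m)"
    unfolding ancestor_path_def by (simp only: distinct_map distinct_upt set_upt)
  show "set (ancestor_path v m) \<subseteq> V"
    unfolding set_ancestor_path using funpow_par_in_V[OF assms(1)] by auto
  show "adj E (ancestor_path v m ! i) (ancestor_path v m ! Suc i)" if "Suc i < length (ancestor_path v m)" for i
    using that assms adj_funpow_par[OF assms(1), of i] by simp
qed (simp add: ancestor_path_def)

lemma first_common_ancestor:
  assumes "x \<in> V" "z \<in> V" "x \<noteq> z" "dep x = dep z"
  obtains i where "1 \<le> i" "i \<le> dep x" "(par ^^ i) x = (par ^^ i) z"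
    "\<And>a. a < i \<Longrightarrow> (par ^^ a) x \<noteq> (par ^^ a) z"
proof -
  let ?meet = "\<lambda>i. (par ^^ i) x = (par ^^ i) z"
  have "?meet (dep x)" using funpow_par_eq_root assms by simp
  define i where "i = (LEAST i. ?meet i)"
  have "?meet i" "i \<le> dep x" unfolding i_def using \<open>?meet (dep x)\<close> by (auto intro: LeastI Least_le)
  moreover have "\<not> ?meet a" if "a < i" for a
    using not_less_Least[of a ?meet] that unfolding i_def by blast
  moreover have "1 \<le> i" using \<open>?meet i\<close> assms(3) by (cases i) auto
  ultimately show ?thesis using that by blast
qed

lemma path_through_common_ancestor:
  assumes V: "x \<in> V" "z \<in> V" and "x \<noteq> z" "dep x = dep z"
  shows "\<exists>L. is_path V E L \<and> hd L = x \<and> last L = z \<and> 3 \<le> length L \<and> (\<forall>y\<in>set L. dep y \<le> dep x)"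
proof -
  obtain i where i: "1 \<le> i" "i \<le> dep x" "(par ^^ i) x = (par ^^ i) z"
    and below: "\<And>a. a < i \<Longrightarrow> (par ^^ a) x \<noteq> (par ^^ a) z"
    using first_common_ancestor[OF assms] by blast
  define up where "up = ancestor_path x (i - 1)"
  define down where "down = rev (ancestor_path z i)"
  have "is_path V E up" "is_path V E down"
    unfolding up_def down_def using i(2) \<open>dep x = dep z\<close> V by (simp_all add: is_path_rev is_path_ancestor_path)
  moreover have "set up \<inter> set down = {}"
  proof -
    have "(par ^^ a) x \<noteq> (par ^^ b) z" if "a \<le> i - 1" "b \<le> i" for a b
    proof
      assume eq: "(par ^^ a) x = (par ^^ b) z"
      have "dep x - a = dep x - b"
        using arg_cong[OF eq, of dep] dep_funpow_par V \<open>dep x = dep z\<close> by simp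
      then have "a = b" using that i(2) by arith
      moreover have "a < i" using that i(1) by simp
      ultimately show False using eq below by blast
    qed
    then show ?thesis unfolding up_def down_def set_rev set_ancestor_path by blast
  qed
  moreover have "adj E (last up) (hd down)"
    using adj_funpow_par[OF V(1), of "i - 1"] i by (simp add: up_def down_def hd_rev)
  ultimately have "is_path V E (up @ down)"
    unfolding is_path_iff_successively by (auto simp: successively_append_iff)
  moreover have "\<forall>y\<in>set (up @ down). dep y \<le> dep x"
    unfolding up_def down_def set_append set_rev set_ancestor_path
    using dep_funpow_par V \<open>dep x = dep z\<close> by auto
  moreover have "3 \<le> length (up @ down)" using i(1) unfolding up_def down_def by simp
  moreover have "hd (up @ down) = x" "last (up @ down) = z"
    unfolding up_def down_def by (simp_all add: hd_append last_rev)
  ultimately show ?thesis by blast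
qed

lemma cycle_if_deeper_connection:
  assumes V: "x \<in> V" "z \<in> V" and "x \<noteq> z" "dep x = dep z"
    and cs: "distinct cs" "set cs \<subseteq> V" "\<forall>c\<in>set cs. dep x < dep c"
    and conn: "successively (adj E) (z # cs @ [x])"
  shows "\<exists>c. is_cycle V E c"
proof -
  obtain L where L: "is_path V E L" "hd L = x" "last L = z" "3 \<le> length L" "\<forall>y\<in>set L. dep y \<le> dep x"
    using path_through_common_ancestor[OF assms(1-4)] by blast
  have "L \<noteq> []" using L(1) unfolding is_path_def by simp
  have conn': "successively (adj E) (z # cs)" "adj E (last (z # cs)) x"
    using conn unfolding append_Cons[symmetric] successively_append_iff by simp_all
  have "set L \<inter> set cs = {}" using L(5) cs(3) by fastforce
  then have "is_path V E (L @ cs)"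
    using L(1,3) \<open>L \<noteq> []\<close> cs conn'(1) unfolding is_path_iff_successively
    by (auto simp: successively_append_iff successively_Cons)
  moreover have "adj E (last (L @ cs)) (hd (L @ cs))"
    using conn'(2) L(2,3) \<open>L \<noteq> []\<close> by (cases "cs = []") auto
  ultimately have "is_cycle V E (L @ cs)" using L(4) unfolding is_cycle_def by simp
  then show ?thesis by blast
qed

lemma parent_if_adj_acyclic:
  assumes acyclic: "\<nexists>c. is_cycle V E c" and "adj E a b" "dep a \<le> dep b"
  shows "b \<noteq> r \<and> par b = a"
proof -
  have V: "a \<in> V" "b \<in> V" using adj_in_V[OF \<open>adj E a b\<close>] by auto
  consider "dep b = Suc (dep a)" | "dep b = dep a"
    using dep_adj_le[OF \<open>adj E a b\<close>] \<open>dep a \<le> dep b\<close> by linarith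
  then show ?thesis
  proof cases
    case 1
    then have "b \<noteq> r" using dep_root by auto
    have "par b = a"
    proof (rule ccontr)
      assume "par b \<noteq> a"
      moreover have "successively (adj E) (par b # [b] @ [a])"
        using adj_sym[OF adj_par[OF V(2) \<open>b \<noteq> r\<close>]] adj_sym[OF \<open>adj E a b\<close>] by simp
      ultimately show False
        using cycle_if_deeper_connection[OF V(1) par_in_V[OF V(2)], of "[b]"] acyclic
          dep_par[OF V(2) \<open>b \<noteq> r\<close>] 1 V by auto
    qed
    then show ?thesis using \<open>b \<noteq> r\<close> by simp
  next
    case 2
    have "a \<noteq> b" using \<open>adj E a b\<close> unfolding adj_def by simp
    then show ?thesis
      using cycle_if_deeper_connection[OF V, of "[]"] adj_sym[OF \<open>adj E a b\<close>] acyclic 2 by auto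
  qed
qed

lemma edge_is_parent_edge:
  assumes "\<nexists>c. is_cycle V E c" "graph V E" "e \<in> E"
  shows "\<exists>v\<in>V. v \<noteq> r \<and> e = {v, par v}"
proof -
  obtain a b where e: "e = {a, b}" "a \<noteq> b" using assms(2,3) unfolding graph_def by blast
  then have "adj E a b" "adj E b a" using assms(3) unfolding adj_def by (auto simp: insert_commute)
  show ?thesis
  proof (cases "dep a \<le> dep b")
    case True
    then show ?thesis
      using parent_if_adj_acyclic[OF assms(1) \<open>adj E a b\<close>] adj_in_V[OF \<open>adj E a b\<close>] e by auto
  next
    case False
    then show ?thesis
      using parent_if_adj_acyclic[OF assms(1) \<open>adj E b a\<close>] adj_in_V[OF \<open>adj E a b\<close>] e
      by (auto simp: insert_commute)
  qed
qed

end

locale rooted_tree = bfs_parent +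
  assumes parent_edge: "e \<in> E \<Longrightarrow> \<exists>v\<in>V. v \<noteq> r \<and> e = {v, par v}"

lemma rooted_tree_exists:
  assumes T: "tree V E" and "r \<in> V"
  shows "\<exists>par dep. rooted_tree V E r par dep"
proof -
  have G: "graph V E" "connected_graph V E" using T unfolding tree_def by auto
  define dep where "dep = gdist V E r"
  define par where "par v = (if v = r then r else SOME u. adj E v u \<and> Suc (dep u) = dep v)" for v
  have par: "adj E v (par v) \<and> Suc (dep (par v)) = dep v" if "v \<in> V" "v \<noteq> r" for v
    using someI_ex[OF gdist_predecessor[OF G \<open>r \<in> V\<close> that, folded dep_def]] that(2)
    unfolding par_def by simp
  interpret bfs_parent V E r par dep
  proof
    show "finite V" using G unfolding graph_def by simp
    show "dep r = 0" using gdist_self[OF \<open>r \<in> V\<close>] unfolding dep_def .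
    show "par v \<in> V" if "v \<in> V" for v
      using that par[of v] adj_in_vertices[OF G(1)] \<open>r \<in> V\<close> unfolding par_def by (cases "v = r") auto
    show "dep v \<le> Suc (dep u)" if "adj E u v" for u v
      using gdist_adj_le[OF G \<open>r \<in> V\<close> that] unfolding dep_def .
    show "u \<in> V \<and> v \<in> V" if "adj E u v" for u v
      using adj_in_vertices[OF G(1) that] .
    show "adj E v (par v)" "dep v = Suc (dep (par v))" if "v \<in> V" "v \<noteq> r" for v
      using par[OF that] by simp_all
  qed (simp_all add: par_def \<open>r \<in> V\<close>)
  have "rooted_tree V E r par dep"
  proof
    show "\<exists>v\<in>V. v \<noteq> r \<and> e = {v, par v}" if "e \<in> E" for e
      using edge_is_parent_edge[OF _ G(1) that] T unfolding tree_def by blast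
  qed
  then show ?thesis by blast
qed

context rooted_tree
begin

definition children :: "'a \<Rightarrow> 'a set" where
  "children x = {c \<in> V. c \<noteq> r \<and> par c = x}"

definition descendants :: "'a \<Rightarrow> 'a set" where
  "descendants x = {y \<in> V. \<exists>j. (par ^^ j) y = x}"

lemma finite_children: "finite (children x)"
  unfolding children_def using finite_V by simp

lemma par_neq_self: "v \<in> V \<Longrightarrow> v \<noteq> r \<Longrightarrow> par v \<noteq> v"
  using dep_par by fastforce

lemma funpow_par_in_children:
  "u \<in> V \<Longrightarrow> 1 \<le> m \<Longrightarrow> (par ^^ (m - 1)) u \<noteq> r \<Longrightarrow> (par ^^ (m - 1)) u \<in> children ((par ^^ m) u)"
  unfolding children_def using funpow_par_in_V apply_funpow_pred[of m par u] by simp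

lemma edges_at_vertex:
  assumes "v \<in> V"
  shows "{e \<in> E. v \<in> e} = (if v = r then {} else {{v, par v}}) \<union> (\<lambda>c. {c, par c}) ` children v"
proof (intro equalityI subsetI)
  fix e assume "e \<in> {e \<in> E. v \<in> e}"
  then obtain x where "x \<in> V" "x \<noteq> r" "e = {x, par x}" "v = x \<or> v = par x"
    using parent_edge by blast
  then show "e \<in> (if v = r then {} else {{v, par v}}) \<union> (\<lambda>c. {c, par c}) ` children v"
    unfolding children_def by auto
next
  fix e assume "e \<in> (if v = r then {} else {{v, par v}}) \<union> (\<lambda>c. {c, par c}) ` children v"
  then show "e \<in> {e \<in> E. v \<in> e}"
    using adj_par[OF assms] adj_par unfolding adj_def children_def by (auto split: if_splits)
qed

lemma degree_eq_card_children:
  assumes "v \<in> V"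
  shows "degree E v = (if v = r then 0 else 1) + card (children v)"
proof -
  have inj: "inj_on (\<lambda>c. {c, par c}) (children v)"
    by (rule inj_onI) (use par_neq_self in \<open>auto simp: children_def doubleton_eq_iff\<close>)
  have "{v, par v} \<noteq> {c, par c}" if "v \<noteq> r" "c \<in> children v" for c
  proof
    assume "{v, par v} = {c, par c}"
    moreover have "c \<in> V" "c \<noteq> r" "par c = v" using that(2) unfolding children_def by auto
    ultimately have "c = par v" using par_neq_self by (auto simp: doubleton_eq_iff)
    then show False using dep_par[OF assms that(1)] dep_par[OF \<open>c \<in> V\<close> \<open>c \<noteq> r\<close>] \<open>par c = v\<close> by simp
  qed
  then have "card {e \<in> E. v \<in> e} = (if v = r then 0 else 1) + card ((\<lambda>c. {c, par c}) ` children v)"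
    unfolding edges_at_vertex[OF assms] by (subst card_Un_disjoint) (auto simp: finite_children)
  then show ?thesis unfolding degree_def card_image[OF inj] .
qed

lemma descendant_iff_depth:
  assumes "y \<in> descendants x"
  shows "x \<in> V \<and> y \<in> V \<and> dep x \<le> dep y \<and> (par ^^ (dep y - dep x)) y = x"
proof -
  obtain j where "y \<in> V" "(par ^^ j) y = x" using assms unfolding descendants_def by blast
  then show ?thesis
    using funpow_par_in_V dep_funpow_par[of y j] funpow_par_eq_root[of y] dep_root
    by (cases "j \<le> dep y") auto
qed

lemma self_in_descendants: "x \<in> V \<Longrightarrow> x \<in> descendants x"
  unfolding descendants_def by (auto intro: exI[of _ 0])

lemma descendants_trans:
  assumes "y \<in> descendants x" "x \<in> descendants w"
  shows "y \<in> descendants w"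
proof -
  obtain i j where "y \<in> V" "(par ^^ i) y = x" "(par ^^ j) x = w"
    using assms unfolding descendants_def by blast
  then show ?thesis using funpow_apply_add[of j par i y] unfolding descendants_def by auto
qed

lemma in_descendants_funpow_par: "y \<in> V \<Longrightarrow> y \<in> descendants ((par ^^ j) y)"
  unfolding descendants_def by auto

lemma descendants_par: "y \<in> descendants x \<Longrightarrow> y \<in> descendants (par x)"
  unfolding descendants_def by (auto intro: exI[of _ "Suc _"])

lemma descendant_of_child:
  assumes "y \<in> descendants x" "y \<noteq> x"
  shows "\<exists>c\<in>children x. y \<in> descendants c"
proof -
  define j where "j = dep y - dep x"
  have y: "x \<in> V" "y \<in> V" "dep x \<le> dep y" "(par ^^ j) y = x"
    using descendant_iff_depth[OF assms(1)] unfolding j_def by auto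
  have "1 \<le> j" using y(4) assms(2) by (cases j) auto
  have "j - 1 < dep y" using \<open>1 \<le> j\<close> unfolding j_def by simp
  then have "(par ^^ (j - 1)) y \<noteq> r" using funpow_par_neq_root[OF y(2)] by blast
  then have "(par ^^ (j - 1)) y \<in> children x"
    using funpow_par_in_children[OF y(2) \<open>1 \<le> j\<close>] y(4) by simp
  then show ?thesis using in_descendants_funpow_par[OF y(2)] by blast
qed

lemma childless_descendant:
  assumes "x \<in> V" "x \<noteq> r"
  shows "\<exists>l\<in>descendants x. l \<noteq> r \<and> children l = {}"
proof -
  have fin: "finite (descendants x)" unfolding descendants_def using finite_V by simp
  have "dep ` descendants x \<noteq> {}" using self_in_descendants[OF assms(1)] by blast
  then obtain l where l: "l \<in> descendants x" "dep l = Max (dep ` descendants x)"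
    using Max_in[OF finite_imageI[OF fin]] by (metis imageE)
  have deepest: "\<forall>y\<in>descendants x. dep y \<le> dep l"
    using Max_ge[OF finite_imageI[OF fin, of dep]] l(2) by simp
  have "l \<noteq> r"
    using l(1) assms funpow_par_eq_root[OF root_in_V] dep_root unfolding descendants_def by auto
  moreover have "children l = {}"
  proof (rule ccontr)
    assume "children l \<noteq> {}"
    then obtain c where c: "c \<in> V" "c \<noteq> r" "par c = l" unfolding children_def by blast
    then have "c \<in> descendants l" using in_descendants_funpow_par[OF c(1), of 1] by simp
    then have "c \<in> descendants x" using descendants_trans l(1) by blast
    then show False using deepest dep_par[OF c(1,2)] c(3) by fastforce
  qed
  ultimately show ?thesis using l(1) by blast
qed

definition tdist :: "'a \<Rightarrow> 'a \<Rightarrow> nat" where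
  "tdist u v = (LEAST m. \<exists>i j. i + j = m \<and> (par ^^ i) u = (par ^^ j) v)"

lemma tdist_le: "(par ^^ i) u = (par ^^ j) v \<Longrightarrow> tdist u v \<le> i + j"
  unfolding tdist_def by (rule Least_le) blast

lemma tdist_commute: "tdist u v = tdist v u"
  unfolding tdist_def by (metis add.commute)

lemma tdist_witness:
  assumes "u \<in> V" "v \<in> V"
  obtains i j where "i + j = tdist u v" "(par ^^ i) u = (par ^^ j) v" "i \<le> dep u" "j \<le> dep v"
proof -
  have "\<exists>m i j. i + j = m \<and> (par ^^ i) u = (par ^^ j) v"
    using funpow_par_eq_root[OF _ order_refl] assms by metis
  from LeastI_ex[OF this] obtain i j where ij: "i + j = tdist u v" "(par ^^ i) u = (par ^^ j) v"
    unfolding tdist_def by blast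
  have "i \<le> dep u"
  proof (rule ccontr)
    assume "\<not> i \<le> dep u"
    then have "(par ^^ dep u) u = (par ^^ j) v" using ij(2) funpow_par_eq_root[OF assms(1)] by simp
    then show False using tdist_le ij(1) \<open>\<not> i \<le> dep u\<close> by fastforce
  qed
  moreover have "j \<le> dep v"
  proof (rule ccontr)
    assume "\<not> j \<le> dep v"
    then have "(par ^^ i) u = (par ^^ dep v) v" using ij(2) funpow_par_eq_root[OF assms(2)] by simp
    then show False using tdist_le ij(1) \<open>\<not> j \<le> dep v\<close> by fastforce
  qed
  ultimately show ?thesis using ij that by blast
qed

lemma tdist_adj_le:
  assumes "u \<in> V" "adj E x y"
  shows "tdist u y \<le> Suc (tdist u x)"
proof -
  obtain i j where ij: "i + j = tdist u x" "(par ^^ i) u = (par ^^ j) x"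
    using tdist_witness[OF assms(1)] adj_in_V[OF assms(2)] by blast
  obtain w where w: "w \<in> V" "w \<noteq> r" "{x, y} = {w, par w}"
    using parent_edge assms(2) unfolding adj_def by blast
  have "x \<noteq> y" using assms(2) unfolding adj_def by simp
  then consider "x = w" "y = par w" | "y = w" "x = par w" using w(3) by (auto simp: doubleton_eq_iff)
  then show ?thesis
  proof cases
    case 1
    show ?thesis
    proof (cases j)
      case 0
      then have "(par ^^ Suc i) u = (par ^^ 0) y" using ij(2) 1 by simp
      then show ?thesis using tdist_le[of "Suc i" u 0 y] ij(1) 0 by simp
    next
      case (Suc j')
      then have "(par ^^ i) u = (par ^^ j') y"
        using ij(2) 1 by (simp add: funpow_Suc_right del: funpow.simps)
      then show ?thesis using tdist_le[of i u j' y] ij(1) Suc by simp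
    qed
  next
    case 2
    then have "(par ^^ i) u = (par ^^ Suc j) y"
      using ij(2) by (simp add: funpow_Suc_right del: funpow.simps)
    then show ?thesis using tdist_le ij(1) by fastforce
  qed
qed

lemma tdist_le_path_len:
  assumes p: "is_path V E p"
  shows "tdist (hd p) (last p) \<le> path_len p"
proof -
  have "p \<noteq> []" "hd p \<in> V" using p unfolding is_path_def by auto
  have "tdist (hd p) (p ! m) \<le> m" if "m < length p" for m
    using that
  proof (induction m)
    case 0
    show ?case using tdist_le[of 0 "hd p" 0 "p ! 0"] \<open>p \<noteq> []\<close> by (simp add: hd_conv_nth)
  next
    case (Suc m)
    then show ?case using tdist_adj_le[OF \<open>hd p \<in> V\<close> is_path_adj_nth[OF p Suc.prems]] by simp
  qed
  then show ?thesis using \<open>p \<noteq> []\<close> unfolding path_len_def by (simp add: last_conv_nth)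
qed

lemma tdist_le_gdist:
  assumes "connected_graph V E" "u \<in> V" "v \<in> V"
  shows "tdist u v \<le> gdist V E u v"
  using shortest_path_exists[OF assms] tdist_le_path_len by fastforce

lemma eq_if_common_ancestor:
  assumes "(par ^^ t) u1 = (par ^^ t) u2" "u1 \<in> V" "u2 \<in> V" "t \<le> dep u1" "t \<le> dep u2"
    and "\<forall>m<t. P ((par ^^ m) u1) \<and> P ((par ^^ m) u2)"
    and "\<forall>m\<in>{1..t}. \<forall>c1\<in>children ((par ^^ m) u1). \<forall>c2\<in>children ((par ^^ m) u1).
           P c1 \<longrightarrow> P c2 \<longrightarrow> c1 = c2"
  shows "u1 = u2"
  using assms
proof (induction t arbitrary: u1 u2)
  case (Suc t)
  have "u1 \<noteq> r" "u2 \<noteq> r" using Suc.prems(4,5) dep_root by auto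
  have "par u1 = par u2"
  proof (rule Suc.IH)
    show "(par ^^ t) (par u1) = (par ^^ t) (par u2)"
      unfolding funpow_apply_Suc using Suc.prems(1) .
    show "t \<le> dep (par u1)" "t \<le> dep (par u2)"
      using Suc.prems(2-5) dep_par \<open>u1 \<noteq> r\<close> \<open>u2 \<noteq> r\<close> by fastforce+
    show "\<forall>m<t. P ((par ^^ m) (par u1)) \<and> P ((par ^^ m) (par u2))"
      unfolding funpow_apply_Suc using Suc.prems(6) by auto
    show "\<forall>m\<in>{1..t}. \<forall>c1\<in>children ((par ^^ m) (par u1)). \<forall>c2\<in>children ((par ^^ m) (par u1)).
           P c1 \<longrightarrow> P c2 \<longrightarrow> c1 = c2"
    proof
      fix m assume "m \<in> {1..t}"
      then have "Suc m \<in> {1..Suc t}" by simp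
      with Suc.prems(7) show "\<forall>c1\<in>children ((par ^^ m) (par u1)). \<forall>c2\<in>children ((par ^^ m) (par u1)).
           P c1 \<longrightarrow> P c2 \<longrightarrow> c1 = c2"
        unfolding funpow_apply_Suc by blast
    qed
  qed (use Suc.prems(2,3) par_in_V in auto)
  moreover have "u1 \<in> children (par u1)" "u2 \<in> children (par u1)"
    using Suc.prems(2,3) \<open>u1 \<noteq> r\<close> \<open>u2 \<noteq> r\<close> \<open>par u1 = par u2\<close> unfolding children_def by auto
  moreover have "P u1" "P u2" using Suc.prems(6) by (metis funpow_0 zero_less_Suc)+
  moreover have "\<forall>c1\<in>children (par u1). \<forall>c2\<in>children (par u1). P c1 \<longrightarrow> P c2 \<longrightarrow> c1 = c2"
    using bspec[OF Suc.prems(7), of 1] by simp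
  ultimately show ?case by blast
qed simp

lemma meeting_children:
  assumes "u \<in> V" "v \<in> V" "i + j = tdist u v" "(par ^^ i) u = (par ^^ j) v" "1 \<le> i" "1 \<le> j"
  shows "(par ^^ (i - 1)) u \<noteq> (par ^^ (j - 1)) v"
    and "(par ^^ (i - 1)) u \<in> children ((par ^^ i) u)"
    and "(par ^^ (j - 1)) v \<in> children ((par ^^ i) u)"
proof -
  show "(par ^^ (i - 1)) u \<noteq> (par ^^ (j - 1)) v"
    using tdist_le[of "i - 1" u "j - 1" v] assms(3,5,6) by auto
  have "(par ^^ (i - 1)) u \<noteq> r"
  proof
    assume "(par ^^ (i - 1)) u = r"
    then have "(par ^^ (i - 1)) u = (par ^^ j) v"
      using apply_funpow_pred[OF assms(5), of par u] par_root assms(4) by simp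
    then show False using tdist_le assms(3,5) by fastforce
  qed
  then show "(par ^^ (i - 1)) u \<in> children ((par ^^ i) u)"
    using funpow_par_in_children[OF assms(1,5)] by blast
  have "(par ^^ (j - 1)) v \<noteq> r"
  proof
    assume "(par ^^ (j - 1)) v = r"
    then have "(par ^^ i) u = (par ^^ (j - 1)) v"
      using apply_funpow_pred[OF assms(6), of par v] par_root assms(4) by simp
    then show False using tdist_le assms(3,6) by fastforce
  qed
  then show "(par ^^ (j - 1)) v \<in> children ((par ^^ i) u)"
    using funpow_par_in_children[OF assms(2,6)] assms(4) by simp
qed

lemma steps_to_leave_descendants:
  assumes "l \<in> descendants w" "q \<in> V" "q \<notin> descendants w" "(par ^^ i) l = (par ^^ j) q"
  shows "dep l - dep w < i"
proof (rule ccontr)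
  assume "\<not> dep l - dep w < i"
  have w: "l \<in> V" "(par ^^ (dep l - dep w)) l = w" using descendant_iff_depth[OF assms(1)] by auto
  have "dep l - dep w - i + i = dep l - dep w" using \<open>\<not> dep l - dep w < i\<close> by simp
  then have "(par ^^ (dep l - dep w - i)) ((par ^^ i) l) = w" using w(2) by (simp only: funpow_apply_add)
  then have "(par ^^ i) l \<in> descendants w"
    using funpow_par_in_V[OF w(1)] unfolding descendants_def by blast
  moreover have "q \<in> descendants ((par ^^ i) l)" using in_descendants_funpow_par[OF assms(2)] assms(4) by simp
  ultimately show False using descendants_trans assms(3) by blast
qed

lemma leaves_iff_children:
  "v \<in> leaves V E \<longleftrightarrow> v \<in> V \<and> (if v = r then card (children r) = 1 else children v = {})"
  unfolding leaves_def using degree_eq_card_children finite_children by auto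

lemma exists_separated_leaf_net:
  assumes "connected_graph V E" "leaves V E \<noteq> {}"
  shows "\<exists>Q\<subseteq>leaves V E. Q \<noteq> {} \<and> separated V E m Q \<and> (\<forall>l\<in>leaves V E - Q. \<exists>q\<in>Q. tdist l q < m)"
proof -
  have "finite (leaves V E)" unfolding leaves_def using finite_V by simp
  then obtain Q where Q: "Q \<subseteq> leaves V E" "Q \<noteq> {}" "\<forall>u\<in>Q. \<forall>v\<in>Q. u \<noteq> v \<longrightarrow> m \<le> tdist u v"
      "\<forall>l\<in>leaves V E - Q. \<exists>q\<in>Q. tdist l q < m"
    using exists_maximal_separated_subset[of "leaves V E" tdist m, OF _ assms(2) tdist_commute] by blast
  have "separated V E m Q" unfolding separated_def
  proof (intro ballI impI)
    fix u v assume uv: "u \<in> Q" "v \<in> Q" "u \<noteq> v"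
    then have "u \<in> V" "v \<in> V" using Q(1) unfolding leaves_def by auto
    then show "m \<le> gdist V E u v" using Q(3) uv tdist_le_gdist[OF assms(1), of u v] by fastforce
  qed
  then show ?thesis using Q by blast
qed

end

lemma tree_has_leaf:
  assumes "tree V E" "2 \<le> card V"
  shows "\<exists>l. l \<in> leaves V E"
proof -
  have "finite V" using assms(2) card.infinite by force
  then obtain v x where "v \<in> V" "x \<in> V" "x \<noteq> v"
    using card_le_Suc0_iff_eq[of V] assms(2) by auto
  obtain par dep where "rooted_tree V E v par dep"
    using rooted_tree_exists[OF assms(1) \<open>v \<in> V\<close>] by blast
  then interpret rooted_tree V E v par dep .
  obtain l where "l \<in> descendants x" "l \<noteq> v" "children l = {}"
    using childless_descendant[OF \<open>x \<in> V\<close> \<open>x \<noteq> v\<close>] by blast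
  then have "l \<in> leaves V E" using leaves_iff_children descendant_iff_depth by auto
  then show ?thesis ..
qed

section \<open>The subtree spanned by a net of leaves\<close>

locale leaf_net = rooted_tree +
  fixes Q :: "'a set" and d k :: nat
  assumes root_leaf: "r \<in> leaves V E"
    and Q_leaves: "Q \<subseteq> leaves V E" and Q_not_empty: "Q \<noteq> {}"
    and net: "l \<in> leaves V E \<Longrightarrow> l \<notin> Q \<Longrightarrow> \<exists>q\<in>Q. tdist l q < 2 * d"
    and d_pos: "1 \<le> d"
begin

text \<open>The vertices having a net vertex below them form the subtree spanned by Q and the root.\<close>

definition spanned :: "'a set" where
  "spanned = {u \<in> V. \<exists>q\<in>Q. q \<in> descendants u}"

definition span_children :: "'a \<Rightarrow> 'a set" where
  "span_children u = {c \<in> children u. c \<in> spanned}"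

definition span_ends :: "'a set" where
  "span_ends = {u \<in> spanned. span_children u = {}}"

definition span_branch :: "'a set" where
  "span_branch = {u \<in> spanned. 2 \<le> card (span_children u)}"

lemma card_children_root: "card (children r) = 1"
  using root_leaf leaves_iff_children by simp

lemma leaves_iff: "v \<in> leaves V E \<longleftrightarrow> v \<in> V \<and> (v = r \<or> children v = {})"
  using leaves_iff_children card_children_root root_in_V by auto

lemma degree_2_iff: "v \<in> V \<Longrightarrow> degree E v = 2 \<longleftrightarrow> v \<noteq> r \<and> card (children v) = 1"
  using degree_eq_card_children card_children_root by auto

lemma Q_subset_V: "Q \<subseteq> V"
  using Q_leaves unfolding leaves_def by auto

lemma finite_Q: "finite Q"
  using Q_subset_V finite_V finite_subset by blast

lemma children_Q: "q \<in> Q \<Longrightarrow> q \<noteq> r \<Longrightarrow> children q = {}"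
  using Q_leaves leaves_iff by blast

lemma spanned_subset_V: "spanned \<subseteq> V"
  unfolding spanned_def by auto

lemma finite_spanned: "finite spanned"
  using spanned_subset_V finite_V finite_subset by blast

lemma finite_span_children: "finite (span_children u)"
  unfolding span_children_def using finite_children by simp

lemma par_in_spanned: "u \<in> spanned \<Longrightarrow> par u \<in> spanned"
  unfolding spanned_def using descendants_par par_in_V by blast

lemma funpow_par_in_spanned: "u \<in> spanned \<Longrightarrow> (par ^^ m) u \<in> spanned"
  by (induction m) (auto simp: par_in_spanned)

lemma Q_subset_spanned: "Q \<subseteq> spanned"
  unfolding spanned_def using Q_subset_V self_in_descendants by blast

lemma root_in_spanned: "r \<in> spanned"
proof -
  obtain q where "q \<in> Q" using Q_not_empty by blast
  then have "q \<in> descendants r"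
    using Q_subset_V in_descendants_funpow_par[of q "dep q"] funpow_par_eq_root by auto
  then show ?thesis using \<open>q \<in> Q\<close> root_in_V unfolding spanned_def by blast
qed

lemma span_ends_subset_Q: "span_ends \<subseteq> Q"
proof
  fix u assume u: "u \<in> span_ends"
  then obtain q where q: "q \<in> Q" "q \<in> descendants u" unfolding span_ends_def spanned_def by blast
  have "q = u"
  proof (rule ccontr)
    assume "q \<noteq> u"
    then obtain c where "c \<in> children u" "q \<in> descendants c" using descendant_of_child[OF q(2)] by blast
    then have "c \<in> span_children u"
      using q(1) unfolding span_children_def spanned_def children_def by auto
    then show False using u unfolding span_ends_def by simp
  qed
  then show "u \<in> Q" using q(1) by simp
qed

lemma in_span_ends: "q \<in> Q \<Longrightarrow> q \<noteq> r \<Longrightarrow> q \<in> span_ends"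
  using children_Q Q_subset_spanned unfolding span_ends_def span_children_def by auto

lemma card_span_children_le: "card (span_children u) \<le> card (children u)"
  unfolding span_children_def by (rule card_mono[OF finite_children]) auto

lemma card_span_children_degree_2:
  assumes "u \<in> spanned" "u \<in> V" "degree E u = 2"
  shows "card (span_children u) = 1"
proof -
  have "u \<noteq> r" "card (children u) = 1" using degree_2_iff assms(2,3) by auto
  moreover have "u \<notin> span_ends"
  proof
    assume "u \<in> span_ends"
    then have "children u = {}" using span_ends_subset_Q children_Q \<open>u \<noteq> r\<close> by blast
    then show False using \<open>card (children u) = 1\<close> by simp
  qed
  then have "card (span_children u) \<noteq> 0"
    using assms(1) finite_span_children unfolding span_ends_def by simp
  ultimately show ?thesis using card_span_children_le[of u] by linarith
qed

lemma root_not_in_span_branch: "r \<notin> span_branch"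
  using card_span_children_le[of r] card_children_root unfolding span_branch_def by simp

lemma sum_card_span_children: "(\<Sum>u\<in>spanned. card (span_children u)) = card spanned - 1"
proof -
  have "spanned - {r} = (\<Union>u\<in>spanned. span_children u)"
    using par_in_spanned spanned_subset_V unfolding span_children_def children_def by auto
  moreover have "card (\<Union>u\<in>spanned. span_children u) = (\<Sum>u\<in>spanned. card (span_children u))"
  proof (rule card_UN_disjoint[OF finite_spanned])
    show "\<forall>u\<in>spanned. finite (span_children u)" using finite_span_children by blast
    show "\<forall>u\<in>spanned. \<forall>v\<in>spanned. u \<noteq> v \<longrightarrow> span_children u \<inter> span_children v = {}"
      unfolding span_children_def children_def by auto
  qed
  ultimately show ?thesis using card_Diff_singleton[OF root_in_spanned] by simp
qed

lemma span_branch_count: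
  shows "card span_branch < card span_ends"
    and "(\<Sum>u\<in>span_branch. card (span_children u)) + 2 \<le> 2 * card span_ends"
proof -
  define mid where "mid = {u \<in> spanned. card (span_children u) = 1}"
  have ends: "span_ends = {u \<in> spanned. card (span_children u) = 0}"
    unfolding span_ends_def using finite_span_children by simp
  have fin: "finite span_ends" "finite mid" "finite span_branch"
    using finite_spanned unfolding span_ends_def mid_def span_branch_def by auto
  have parts: "spanned = span_ends \<union> mid \<union> span_branch" "span_ends \<inter> mid = {}"
    "(span_ends \<union> mid) \<inter> span_branch = {}"
    unfolding ends mid_def span_branch_def by auto
  have "card spanned = card span_ends + card mid + card span_branch"
    using parts fin by (simp add: card_Un_disjoint)
  moreover have "(\<Sum>u\<in>spanned. card (span_children u))
      = (\<Sum>u\<in>span_ends. card (span_children u)) + (\<Sum>u\<in>mid. card (span_children u))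
        + (\<Sum>u\<in>span_branch. card (span_children u))"
    using parts fin by (simp add: sum.union_disjoint)
  moreover have "(\<Sum>u\<in>span_ends. card (span_children u)) = 0" "(\<Sum>u\<in>mid. card (span_children u)) = card mid"
    unfolding ends mid_def by simp_all
  moreover have "2 * card span_branch \<le> (\<Sum>u\<in>span_branch. card (span_children u))"
    using sum_mono[of span_branch "\<lambda>_. 2" "\<lambda>u. card (span_children u)"] unfolding span_branch_def by simp
  moreover have "1 \<le> card spanned" using root_in_spanned finite_spanned card_0_eq by fastforce
  ultimately show "card span_branch < card span_ends"
    and "(\<Sum>u\<in>span_branch. card (span_children u)) + 2 \<le> 2 * card span_ends"
    using sum_card_span_children by linarith+
qed

definition branch_children :: "'a set" where
  "branch_children = {c \<in> spanned. c \<noteq> r \<and> par c \<in> insert r span_branch}"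

lemma card_branch_children: "card branch_children \<le> 2 * card span_ends"
proof -
  have fin: "finite (insert r span_branch)" using finite_spanned unfolding span_branch_def by simp
  have "branch_children \<subseteq> (\<Union>a\<in>insert r span_branch. span_children a)"
    unfolding branch_children_def span_children_def children_def using spanned_subset_V by auto
  then have "card branch_children \<le> card (\<Union>a\<in>insert r span_branch. span_children a)"
    by (rule card_mono[OF finite_UN_I[OF fin finite_span_children]])
  also have "\<dots> \<le> (\<Sum>a\<in>insert r span_branch. card (span_children a))"
    by (rule card_UN_le[OF fin])
  also have "\<dots> = card (span_children r) + (\<Sum>a\<in>span_branch. card (span_children a))"
    using root_not_in_span_branch fin by simp
  also have "\<dots> \<le> 1 + (\<Sum>a\<in>span_branch. card (span_children a))"
    using card_span_children_le[of r] card_children_root by simp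
  finally show ?thesis using span_branch_count(2) by linarith
qed

section \<open>Covering the vertices\<close>

definition near_leaves :: "'a set" where
  "near_leaves = (\<lambda>(l, j). (par ^^ j) l) ` (leaves V E \<times> {..<2 * d})"

definition chain_starts :: "'a set" where
  "chain_starts = {v \<in> V. \<forall>j\<le>k. degree E ((par ^^ j) v) = 2}"

definition near_ends :: "'a set" where
  "near_ends = (\<lambda>(b, h). (par ^^ h) b) ` ((span_ends \<union> span_branch) \<times> {..<2 * d})"

definition below_branch :: "'a set" where
  "below_branch = {u \<in> spanned. u \<noteq> r \<and> (\<exists>i. 1 \<le> i \<and> i < k + 2 * d \<and> (par ^^ i) u \<in> insert r span_branch)}"

lemma near_endsI: "b \<in> span_ends \<union> span_branch \<Longrightarrow> h < 2 * d \<Longrightarrow> (par ^^ h) b \<in> near_ends"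
  unfolding near_ends_def by force

lemma below_branchI:
  "u \<in> spanned \<Longrightarrow> u \<noteq> r \<Longrightarrow> 1 \<le> i \<Longrightarrow> i < k + 2 * d \<Longrightarrow> (par ^^ i) u \<in> insert r span_branch
    \<Longrightarrow> u \<in> below_branch"
  unfolding below_branch_def by blast

lemma near_leavesI: "l \<in> leaves V E \<Longrightarrow> j < 2 * d \<Longrightarrow> (par ^^ j) l \<in> near_leaves"
  unfolding near_leaves_def by force

lemma root_in_near_leaves: "r \<in> near_leaves"
  using near_leavesI[OF root_leaf, of 0] d_pos by simp

text \<open>The net vertex close to a leaf at least 2d levels below w cannot lie outside the
  subtree of w.\<close>

lemma spanned_if_not_near_leaves:
  assumes "w \<in> V" "w \<notin> near_leaves"
  shows "w \<in> spanned"
proof -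
  have "w \<noteq> r" using root_in_near_leaves assms(2) by blast
  obtain l where l: "l \<in> descendants w" "l \<noteq> r" "children l = {}"
    using childless_descendant[OF assms(1) \<open>w \<noteq> r\<close>] by blast
  have "l \<in> V" "(par ^^ (dep l - dep w)) l = w" using descendant_iff_depth[OF l(1)] by auto
  have "l \<in> leaves V E" using leaves_iff \<open>l \<in> V\<close> l(3) by simp
  then have far: "2 * d \<le> dep l - dep w"
    using near_leavesI[of l "dep l - dep w"] assms(2) \<open>(par ^^ (dep l - dep w)) l = w\<close> by (auto simp: not_less[symmetric])
  show ?thesis
  proof (cases "l \<in> Q")
    case True
    then show ?thesis using l(1) assms(1) unfolding spanned_def by blast
  next
    case False
    obtain q where q: "q \<in> Q" "tdist l q < 2 * d" using net[OF \<open>l \<in> leaves V E\<close> False] by blast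
    have "q \<in> V" using q(1) Q_subset_V by blast
    obtain i j where ij: "i + j = tdist l q" "(par ^^ i) l = (par ^^ j) q"
      using tdist_witness[OF \<open>l \<in> V\<close> \<open>q \<in> V\<close>] by blast
    have "q \<in> descendants w"
    proof (rule ccontr)
      assume "q \<notin> descendants w"
      then have "dep l - dep w < i" using steps_to_leave_descendants[OF l(1) \<open>q \<in> V\<close> _ ij(2)] by blast
      then show False using far q(2) ij(1) by linarith
    qed
    then show ?thesis unfolding spanned_def using q(1) assms(1) by blast
  qed
qed

lemma branch_at_meeting:
  assumes "u \<in> V" "v \<in> V" "i + j = tdist u v" "(par ^^ i) u = (par ^^ j) v" "1 \<le> i" "1 \<le> j"
    and "(par ^^ (i - 1)) u \<in> spanned" "(par ^^ (j - 1)) v \<in> spanned"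
  shows "(par ^^ i) u \<in> span_branch"
proof -
  note meet = meeting_children[OF assms(1-6)]
  have "{(par ^^ (i - 1)) u, (par ^^ (j - 1)) v} \<subseteq> span_children ((par ^^ i) u)"
    using meet(2,3) assms(7,8) unfolding span_children_def by auto
  moreover have "card {(par ^^ (i - 1)) u, (par ^^ (j - 1)) v} = 2" using meet(1) by simp
  ultimately have "2 \<le> card (span_children ((par ^^ i) u))"
    using card_mono[OF finite_span_children] by metis
  moreover have "(par ^^ i) u \<in> spanned"
    using par_in_spanned[OF assms(7)] apply_funpow_pred[OF assms(5), of par u] by simp
  ultimately show ?thesis unfolding span_branch_def by simp
qed

text \<open>The leaves below a child outside the span are close to the net, and the shortest
  connection from such a leaf to the net leaves the child's subtree through its parent s.\<close>

lemma net_meets_pendant_child: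
  assumes "s \<in> spanned" "c \<in> children s" "c \<notin> spanned"
  obtains q p j where "q \<in> Q" "p + j < 2 * d" "(par ^^ p) s = (par ^^ j) q"
    "1 \<le> p \<Longrightarrow> 1 \<le> j \<Longrightarrow> (par ^^ p) s \<in> span_branch"
proof -
  have c: "c \<in> V" "c \<noteq> r" "par c = s" using assms(2) unfolding children_def by auto
  obtain l where l: "l \<in> descendants c" "l \<noteq> r" "children l = {}"
    using childless_descendant[OF c(1,2)] by blast
  define e where "e = dep l - dep c"
  have "l \<in> V" "(par ^^ e) l = c" using descendant_iff_depth[OF l(1)] unfolding e_def by auto
  then have ls: "(par ^^ Suc e) l = s" using c(3) by simp
  have "l \<in> leaves V E" using leaves_iff \<open>l \<in> V\<close> l(3) by simp
  moreover have "l \<notin> Q" using l(1) assms(3) c(1) unfolding spanned_def by blast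
  ultimately obtain q where q: "q \<in> Q" "tdist l q < 2 * d" using net by blast
  have "q \<in> V" "q \<notin> descendants c" using q(1) Q_subset_V assms(3) c(1) unfolding spanned_def by auto
  obtain i j where ij: "i + j = tdist l q" "(par ^^ i) l = (par ^^ j) q"
    using tdist_witness[OF \<open>l \<in> V\<close> \<open>q \<in> V\<close>] by blast
  have "e < i" using steps_to_leave_descendants[OF l(1) \<open>q \<in> V\<close> \<open>q \<notin> descendants c\<close> ij(2)]
    unfolding e_def .
  define p where "p = i - Suc e"
  have "i = p + Suc e" using \<open>e < i\<close> unfolding p_def by simp
  then have meet: "(par ^^ p) s = (par ^^ i) l" unfolding ls[symmetric] funpow_apply_add by simp
  have "(par ^^ p) s \<in> span_branch" if "1 \<le> p" "1 \<le> j"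
  proof -
    have "i - 1 = (p - 1) + Suc e" using \<open>i = p + Suc e\<close> that(1) by simp
    then have "(par ^^ (i - 1)) l = (par ^^ (p - 1)) s"
      unfolding ls[symmetric] funpow_apply_add by (rule arg_cong)
    then have "(par ^^ (i - 1)) l \<in> spanned" using funpow_par_in_spanned[OF assms(1)] by simp
    moreover have "(par ^^ (j - 1)) q \<in> spanned" using funpow_par_in_spanned Q_subset_spanned q(1) by blast
    ultimately show ?thesis
      using branch_at_meeting[OF \<open>l \<in> V\<close> \<open>q \<in> V\<close> ij] \<open>e < i\<close> that(2) meet by simp
  qed
  moreover have "p + j < 2 * d" using ij(1) q(2) \<open>i = p + Suc e\<close> by linarith
  ultimately show ?thesis using that q(1) meet ij(2) by simp
qed

lemma near_net_if_pendant_child: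
  assumes "s \<in> spanned" "c \<in> children s" "c \<notin> spanned"
  shows "(\<exists>q\<in>Q. \<exists>t<2 * d. (par ^^ t) q = s) \<or> (\<exists>p. 1 \<le> p \<and> p < 2 * d \<and> (par ^^ p) s \<in> insert r span_branch)"
proof -
  obtain q p j where q: "q \<in> Q" "p + j < 2 * d" "(par ^^ p) s = (par ^^ j) q"
    and branch: "1 \<le> p \<Longrightarrow> 1 \<le> j \<Longrightarrow> (par ^^ p) s \<in> span_branch"
    using net_meets_pendant_child[OF assms] by blast
  consider "p = 0" | "1 \<le> p" "j = 0" | "1 \<le> p" "1 \<le> j" by linarith
  then show ?thesis
  proof cases
    case 1
    then show ?thesis using q by (intro disjI1 bexI[of _ q] exI[of _ j]) auto
  next
    case 2
    have "(par ^^ p) s = r"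
    proof (rule ccontr)
      assume "(par ^^ p) s \<noteq> r"
      have "s \<in> V" "c \<in> V" "par c = s" using assms(1,2) spanned_subset_V unfolding children_def by auto
      moreover have "c \<in> descendants s" using in_descendants_funpow_par[of c 1] \<open>c \<in> V\<close> \<open>par c = s\<close> by simp
      moreover have "s \<in> descendants q" using in_descendants_funpow_par[of s p] \<open>s \<in> V\<close> q(3) 2(2) by simp
      ultimately have "c \<in> descendants q" using descendants_trans by blast
      moreover have "c \<noteq> q" using q(1) Q_subset_spanned assms(3) by blast
      ultimately have "children q \<noteq> {}" using descendant_of_child by blast
      then show False using children_Q[OF q(1)] q(3) 2(2) \<open>(par ^^ p) s \<noteq> r\<close> by auto
    qed
    then show ?thesis using 2(1) q(2) by (intro disjI2 exI[of _ p]) simp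
  next
    case 3
    then show ?thesis using branch q(2) by (intro disjI2 exI[of _ p]) simp
  qed
qed

lemma span_children_unique:
  "card (span_children x) \<le> 1 \<Longrightarrow> c1 \<in> children x \<Longrightarrow> c2 \<in> children x \<Longrightarrow> c1 \<in> spanned \<Longrightarrow> c2 \<in> spanned
    \<Longrightarrow> c1 = c2"
  using card_le_Suc0_iff_eq[OF finite_span_children] unfolding span_children_def by auto

lemma ancestor_of_net_vertex:
  assumes "w \<in> spanned" "q \<in> Q" "q \<noteq> r" "(par ^^ j) w = (par ^^ t) q" "j \<le> dep w" "t \<le> dep q"
    and unique: "\<forall>m\<in>{1..j}. card (span_children ((par ^^ m) w)) \<le> 1"
  shows "j \<le> t \<and> (par ^^ (t - j)) q = w"
proof -
  have V: "w \<in> V" "q \<in> V" using assms(1,2) spanned_subset_V Q_subset_V by auto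
  have spanned: "(par ^^ m) w \<in> spanned" "(par ^^ m) q \<in> spanned" for m
    using funpow_par_in_spanned assms(1,2) Q_subset_spanned by auto
  have unique': "\<forall>c1\<in>children ((par ^^ m) w). \<forall>c2\<in>children ((par ^^ m) w). c1 \<in> spanned \<longrightarrow> c2 \<in> spanned \<longrightarrow> c1 = c2"
    if "m \<in> {1..j}" for m
    using span_children_unique unique that by blast
  have "j \<le> t"
  proof (rule ccontr)
    assume "\<not> j \<le> t"
    have "(par ^^ (j - t)) w = q"
    proof (rule eq_if_common_ancestor[where P = "\<lambda>c. c \<in> spanned"])
      show "(par ^^ t) ((par ^^ (j - t)) w) = (par ^^ t) q"
        using assms(4) \<open>\<not> j \<le> t\<close> by (simp add: funpow_apply_add)
      show "\<forall>m\<in>{1..t}. \<forall>c1\<in>children ((par ^^ m) ((par ^^ (j - t)) w)).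
          \<forall>c2\<in>children ((par ^^ m) ((par ^^ (j - t)) w)). c1 \<in> spanned \<longrightarrow> c2 \<in> spanned \<longrightarrow> c1 = c2"
      proof
        fix m assume "m \<in> {1..t}"
        then have "m + (j - t) \<in> {1..j}" using \<open>\<not> j \<le> t\<close> by auto
        then show "\<forall>c1\<in>children ((par ^^ m) ((par ^^ (j - t)) w)).
          \<forall>c2\<in>children ((par ^^ m) ((par ^^ (j - t)) w)). c1 \<in> spanned \<longrightarrow> c2 \<in> spanned \<longrightarrow> c1 = c2"
          using unique' unfolding funpow_apply_add by blast
      qed
    qed (use V spanned assms(5,6) \<open>\<not> j \<le> t\<close> funpow_par_in_V dep_funpow_par in \<open>auto simp: funpow_apply_add\<close>)
    then have "w \<in> descendants q" using in_descendants_funpow_par[OF V(1)] by blast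
    moreover have "w \<noteq> q" using dep_funpow_par[OF V(1), of "j - t"] \<open>(par ^^ (j - t)) w = q\<close> assms(5) \<open>\<not> j \<le> t\<close> by auto
    ultimately show False using descendant_of_child children_Q[OF assms(2,3)] by blast
  qed
  moreover have "w = (par ^^ (t - j)) q"
  proof (rule eq_if_common_ancestor[where P = "\<lambda>c. c \<in> spanned"])
    show "(par ^^ j) w = (par ^^ j) ((par ^^ (t - j)) q)"
      using assms(4) \<open>j \<le> t\<close> by (simp add: funpow_apply_add)
  qed (use V spanned assms(5,6) unique' \<open>j \<le> t\<close> funpow_par_in_V dep_funpow_par in \<open>auto simp: funpow_apply_add\<close>)
  ultimately show ?thesis by simp
qed

lemma covered_below_pendant:
  assumes "w \<in> spanned" "j \<le> k" "j \<le> dep w" "(par ^^ j) w \<noteq> r"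
    and path: "\<forall>m\<in>{1..j}. card (span_children ((par ^^ m) w)) = 1"
    and "c \<in> children ((par ^^ j) w)" "c \<notin> spanned"
  shows "w \<in> near_ends \<union> below_branch"
  using near_net_if_pendant_child[OF funpow_par_in_spanned[OF assms(1)] assms(6,7)]
proof
  assume "\<exists>q\<in>Q. \<exists>t<2 * d. (par ^^ t) q = (par ^^ j) w"
  then obtain q t where q: "q \<in> Q" "t < 2 * d" "(par ^^ t) q = (par ^^ j) w" by blast
  have "q \<noteq> r" using q(3) assms(4) by auto
  have "t < dep q" using less_dep_if_funpow_par_neq_root[of q t] q(1,3) assms(4) Q_subset_V by auto
  then have "(par ^^ (t - j)) q = w"
    using ancestor_of_net_vertex[OF assms(1) q(1) \<open>q \<noteq> r\<close> q(3)[symmetric] assms(3)] path by fastforce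
  then show ?thesis using near_endsI[of q "t - j"] in_span_ends[OF q(1) \<open>q \<noteq> r\<close>] q(2) by auto
next
  assume "\<exists>p. 1 \<le> p \<and> p < 2 * d \<and> (par ^^ p) ((par ^^ j) w) \<in> insert r span_branch"
  then obtain p where "1 \<le> p" "p < 2 * d" "(par ^^ (p + j)) w \<in> insert r span_branch"
    by (auto simp: funpow_apply_add)
  moreover have "w \<noteq> r" using assms(4) by auto
  ultimately have "w \<in> below_branch" using below_branchI[OF assms(1), of "p + j"] assms(2) by simp
  then show ?thesis ..
qed

lemma degree_2_ancestors:
  assumes "w \<in> spanned" "\<forall>m<j. degree E ((par ^^ m) w) = 2"
  shows "j \<le> dep w" and "m < j \<Longrightarrow> card (span_children ((par ^^ m) w)) = 1"
    and "1 \<le> j \<Longrightarrow> (par ^^ (j - 1)) w \<in> span_children ((par ^^ j) w)"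
proof -
  have "w \<in> V" using assms(1) spanned_subset_V by auto
  have path: "(par ^^ m) w \<noteq> r \<and> card (span_children ((par ^^ m) w)) = 1" if "m < j" for m
    using assms(2) that degree_2_iff funpow_par_in_V[OF \<open>w \<in> V\<close>] card_span_children_degree_2
      funpow_par_in_spanned[OF assms(1)] by auto
  then show "m < j \<Longrightarrow> card (span_children ((par ^^ m) w)) = 1" by blast
  show "j \<le> dep w"
    using less_dep_if_funpow_par_neq_root[OF \<open>w \<in> V\<close>, of "j - 1"] path[of "j - 1"] by (cases j) auto
  show "(par ^^ (j - 1)) w \<in> span_children ((par ^^ j) w)" if "1 \<le> j"
    using funpow_par_in_children[OF \<open>w \<in> V\<close> that] path[of "j - 1"] that funpow_par_in_spanned[OF assms(1)]
    unfolding span_children_def by simp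
qed

lemma covered_below_non_degree_2:
  assumes "w \<in> spanned" "w \<noteq> r" "j \<le> k" "degree E ((par ^^ j) w) \<noteq> 2"
    and below: "\<forall>m<j. degree E ((par ^^ m) w) = 2"
  shows "w \<in> near_ends \<union> below_branch"
proof -
  define s where "s = (par ^^ j) w"
  have "s \<in> spanned" "s \<in> V"
    using assms(1) spanned_subset_V funpow_par_in_spanned unfolding s_def by auto
  note path = degree_2_ancestors[OF assms(1) below]
  have child: "(par ^^ (j - 1)) w \<in> span_children s" if "1 \<le> j"
    using path(3)[OF that] unfolding s_def .
  consider "s = r" | "s \<noteq> r" "card (span_children s) = 1" | "s \<noteq> r" "card (span_children s) \<noteq> 1"
    by blast
  then show ?thesis
  proof cases
    case 1
    then show ?thesis using below_branchI[OF assms(1,2), of j] assms(2,3) d_pos unfolding s_def by (cases j) auto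
  next
    case 2
    have "card (children s) \<noteq> 1" using assms(4) degree_2_iff[OF \<open>s \<in> V\<close>] 2(1) unfolding s_def by simp
    then have "span_children s \<noteq> children s" using 2(2) by auto
    then obtain c where "c \<in> children s" "c \<notin> spanned" unfolding span_children_def by blast
    moreover have "\<forall>m\<in>{1..j}. card (span_children ((par ^^ m) w)) = 1"
      using path(2) 2(2) unfolding s_def by (metis atLeastAtMost_iff le_neq_implies_less)
    ultimately show ?thesis
      using covered_below_pendant[OF assms(1,3) path(1)] 2(1) unfolding s_def by blast
  next
    case 3
    show ?thesis
    proof (cases "j = 0")
      case True
      then have "w \<in> span_ends \<union> span_branch"
        using 3(2) assms(1) card_0_eq[OF finite_span_children, of w] unfolding span_ends_def span_branch_def s_def
        by (cases "card (span_children w) = 0") auto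
      then show ?thesis using near_endsI[of w 0] d_pos by simp
    next
      case False
      then have "span_children s \<noteq> {}" using child by fastforce
      then have "card (span_children s) \<noteq> 0" using finite_span_children by simp
      then have "s \<in> span_branch" using 3(2) \<open>s \<in> spanned\<close> unfolding span_branch_def by simp
      then show ?thesis using below_branchI[OF assms(1,2), of j] False assms(3) d_pos unfolding s_def by simp
    qed
  qed
qed

lemma covering: "V \<subseteq> near_leaves \<union> chain_starts \<union> near_ends \<union> below_branch"
proof
  fix w assume "w \<in> V"
  show "w \<in> near_leaves \<union> chain_starts \<union> near_ends \<union> below_branch"
  proof (cases "w \<in> near_leaves \<or> w \<in> chain_starts")
    case False
    then have "w \<in> spanned" "w \<noteq> r" using spanned_if_not_near_leaves \<open>w \<in> V\<close> root_in_near_leaves by auto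
    have "\<exists>j. j \<le> k \<and> degree E ((par ^^ j) w) \<noteq> 2"
      using False \<open>w \<in> V\<close> unfolding chain_starts_def by auto
    from exists_least_iff[THEN iffD1, OF this] obtain j where
      "j \<le> k" "degree E ((par ^^ j) w) \<noteq> 2" "\<forall>m<j. degree E ((par ^^ m) w) = 2"
      by fastforce
    then show ?thesis using covered_below_non_degree_2[OF \<open>w \<in> spanned\<close> \<open>w \<noteq> r\<close>] by blast
  qed blast
qed

section \<open>Counting\<close>

lemma card_near_leaves: "card near_leaves \<le> 2 * d * card (leaves V E)"
proof -
  have "finite (leaves V E)" using finite_V unfolding leaves_def by simp
  then have "card near_leaves \<le> card (leaves V E \<times> {..<2 * d})"
    unfolding near_leaves_def by (intro card_image_le) simp
  then show ?thesis by (simp add: card_cartesian_product ac_simps)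
qed

lemma card_near_ends: "card near_ends \<le> 4 * d * card Q"
proof -
  have fin: "finite (span_ends \<union> span_branch)"
    using finite_spanned unfolding span_ends_def span_branch_def by simp
  have "card near_ends \<le> card ((span_ends \<union> span_branch) \<times> {..<2 * d})"
    unfolding near_ends_def using fin by (intro card_image_le) simp
  also have "\<dots> \<le> (card span_ends + card span_branch) * (2 * d)"
    by (simp add: card_cartesian_product card_Un_le)
  also have "\<dots> \<le> (2 * card Q) * (2 * d)"
    using span_branch_count(1) card_mono[OF finite_Q span_ends_subset_Q] by simp
  finally show ?thesis by (simp add: ac_simps)
qed

definition branch_exit :: "'a \<Rightarrow> nat" where
  "branch_exit u = (LEAST i. 1 \<le> i \<and> (par ^^ i) u \<in> insert r span_branch)"

lemma branch_exit:
  assumes "u \<in> below_branch"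
  shows "1 \<le> branch_exit u" "branch_exit u < k + 2 * d"
    and "(par ^^ branch_exit u) u \<in> insert r span_branch"
    and "\<And>m. m < branch_exit u \<Longrightarrow> (par ^^ m) u \<in> spanned \<and> (par ^^ m) u \<noteq> r"
    and "\<And>m. 1 \<le> m \<Longrightarrow> m < branch_exit u \<Longrightarrow> card (span_children ((par ^^ m) u)) \<le> 1"
proof -
  let ?P = "\<lambda>i. 1 \<le> i \<and> (par ^^ i) u \<in> insert r span_branch"
  obtain i where i: "?P i" "i < k + 2 * d" "u \<in> spanned" "u \<noteq> r"
    using assms unfolding below_branch_def by blast
  show "1 \<le> branch_exit u" "(par ^^ branch_exit u) u \<in> insert r span_branch"
    using LeastI[of ?P, OF i(1)] unfolding branch_exit_def by auto
  show "branch_exit u < k + 2 * d"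
    using Least_le[of ?P, OF i(1)] i(2) unfolding branch_exit_def by simp
  have before: "\<not> ?P m" if "m < branch_exit u" for m
    using not_less_Least[of m ?P] that unfolding branch_exit_def by blast
  show "(par ^^ m) u \<in> spanned \<and> (par ^^ m) u \<noteq> r" if "m < branch_exit u" for m
    using before[OF that] funpow_par_in_spanned[OF i(3), of m] i(4) by (cases m) auto
  show "card (span_children ((par ^^ m) u)) \<le> 1" if "1 \<le> m" "m < branch_exit u" for m
    using before[of m] that funpow_par_in_spanned[OF i(3)] unfolding span_branch_def by auto
qed

text \<open>Between a vertex of the span and its first branch ancestor every vertex has a single
  child in the span, so the vertex is determined by the child of that ancestor it lies below
  and by its distance to it.\<close>

lemma below_branch_inj:
  assumes "u1 \<in> below_branch" "u2 \<in> below_branch" "branch_exit u1 = branch_exit u2"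
    and "(par ^^ (branch_exit u1 - 1)) u1 = (par ^^ (branch_exit u1 - 1)) u2"
  shows "u1 = u2"
proof (rule eq_if_common_ancestor[OF assms(4), where P = "\<lambda>c. c \<in> spanned"])
  show "u1 \<in> V" "u2 \<in> V" using assms(1,2) spanned_subset_V unfolding below_branch_def by auto
  have "branch_exit u1 - 1 < branch_exit u1" using branch_exit(1)[OF assms(1)] by simp
  then show "branch_exit u1 - 1 \<le> dep u1" "branch_exit u1 - 1 \<le> dep u2"
    using less_dep_if_funpow_par_neq_root[OF \<open>u1 \<in> V\<close>] less_dep_if_funpow_par_neq_root[OF \<open>u2 \<in> V\<close>]
      branch_exit(4)[OF assms(1)] branch_exit(4)[OF assms(2)] assms(3) by (simp_all add: less_imp_le)
  show "\<forall>m<branch_exit u1 - 1. (par ^^ m) u1 \<in> spanned \<and> (par ^^ m) u2 \<in> spanned"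
    using branch_exit(4) assms(1,2,3) by simp
  show "\<forall>m\<in>{1..branch_exit u1 - 1}. \<forall>c1\<in>children ((par ^^ m) u1). \<forall>c2\<in>children ((par ^^ m) u1).
      c1 \<in> spanned \<longrightarrow> c2 \<in> spanned \<longrightarrow> c1 = c2"
  proof
    fix m assume "m \<in> {1..branch_exit u1 - 1}"
    then have "card (span_children ((par ^^ m) u1)) \<le> 1" using branch_exit(5)[OF assms(1), of m] by auto
    then show "\<forall>c1\<in>children ((par ^^ m) u1). \<forall>c2\<in>children ((par ^^ m) u1).
      c1 \<in> spanned \<longrightarrow> c2 \<in> spanned \<longrightarrow> c1 = c2"
      using span_children_unique by blast
  qed
qed

lemma card_below_branch: "card below_branch \<le> 2 * (k + 2 * d) * card Q"
proof -
  define g where "g u = ((par ^^ (branch_exit u - 1)) u, branch_exit u)" for u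
  have "inj_on g below_branch"
    by (rule inj_onI) (use below_branch_inj in \<open>auto simp: g_def\<close>)
  moreover have "g ` below_branch \<subseteq> branch_children \<times> {1..<k + 2 * d}"
  proof
    fix y assume "y \<in> g ` below_branch"
    then obtain u where u: "u \<in> below_branch" "y = g u" by blast
    have "par ((par ^^ (branch_exit u - 1)) u) = (par ^^ branch_exit u) u"
      using apply_funpow_pred[OF branch_exit(1)[OF u(1)]] .
    then show "y \<in> branch_children \<times> {1..<k + 2 * d}"
      using branch_exit[OF u(1)] u(2) unfolding branch_children_def g_def by simp
  qed
  moreover have "finite branch_children" using finite_spanned unfolding branch_children_def by simp
  ultimately have "card below_branch \<le> card (branch_children \<times> {1..<k + 2 * d})"
    using card_image[of g below_branch] card_mono[of "branch_children \<times> {1..<k + 2 * d}" "g ` below_branch"]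
    by simp
  also have "\<dots> \<le> 2 * card Q * (k + 2 * d)"
    using card_branch_children card_mono[OF finite_Q span_ends_subset_Q]
    by (simp add: card_cartesian_product mult_mono)
  finally show ?thesis by (simp add: ac_simps)
qed

lemma card_V_le: "card V \<le> 2 * d * card (leaves V E) + card chain_starts + (2 * k + 8 * d) * card Q"
proof -
  have fin: "finite near_leaves" "finite chain_starts" "finite near_ends" "finite below_branch"
    using finite_V finite_spanned
    unfolding near_leaves_def leaves_def chain_starts_def near_ends_def span_ends_def span_branch_def
      below_branch_def by auto
  have "card V \<le> card (near_leaves \<union> chain_starts \<union> near_ends \<union> below_branch)"
    using covering fin by (intro card_mono) auto
  also have "\<dots> \<le> card near_leaves + card chain_starts + card near_ends + card below_branch"
    using card_Un_le[of "near_leaves \<union> chain_starts \<union> near_ends" below_branch]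
      card_Un_le[of "near_leaves \<union> chain_starts" near_ends] card_Un_le[of near_leaves chain_starts]
    by linarith
  finally show ?thesis
    using card_near_leaves card_near_ends card_below_branch by (simp add: algebra_simps)
qed

section \<open>Disjoint bare paths\<close>

lemma chain_starts_subset_V: "chain_starts \<subseteq> V"
  unfolding chain_starts_def by simp

lemma chain_starts_ancestor:
  assumes "v \<in> chain_starts" "i \<le> k"
  shows "(par ^^ i) v \<noteq> r" "card (children ((par ^^ i) v)) = 1" "i < dep v"
proof -
  have "v \<in> V" using assms(1) chain_starts_subset_V by blast
  then show "(par ^^ i) v \<noteq> r" "card (children ((par ^^ i) v)) = 1"
    using assms degree_2_iff[OF funpow_par_in_V] unfolding chain_starts_def by auto
  then show "i < dep v" using less_dep_if_funpow_par_neq_root \<open>v \<in> V\<close> by blast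
qed

lemma bare_path_ancestor_path:
  assumes "v \<in> chain_starts"
  shows "bare_path V E (ancestor_path v k)" "path_len (ancestor_path v k) = k"
proof -
  have "is_path V E (ancestor_path v k)"
    using is_path_ancestor_path chain_starts_ancestor(3)[OF assms order_refl] assms chain_starts_subset_V
    by (simp add: subset_iff)
  moreover have "degree E (ancestor_path v k ! i) = 2" if "i \<le> k" for i
    using assms that unfolding chain_starts_def by simp
  ultimately show "bare_path V E (ancestor_path v k)" unfolding bare_path_def by simp
  show "path_len (ancestor_path v k) = k" unfolding path_len_def by simp
qed

lemma chain_starts_meet:
  assumes "v1 \<in> chain_starts" "v2 \<in> chain_starts" "b \<le> a" "a \<le> k" "(par ^^ a) v1 = (par ^^ b) v2"
  shows "(par ^^ (a - b)) v1 = v2"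
proof (rule eq_if_common_ancestor[where P = "\<lambda>_. True" and t = b])
  have V: "v1 \<in> V" "v2 \<in> V" using assms(1,2) chain_starts_subset_V by auto
  show "(par ^^ b) ((par ^^ (a - b)) v1) = (par ^^ b) v2" using assms(3,5) by (simp add: funpow_apply_add)
  show "(par ^^ (a - b)) v1 \<in> V" "v2 \<in> V" using V funpow_par_in_V by auto
  show "b \<le> dep ((par ^^ (a - b)) v1)"
    using chain_starts_ancestor(3)[OF assms(1,4)] dep_funpow_par[OF V(1), of "a - b"] assms(3) by simp
  show "b \<le> dep v2" using chain_starts_ancestor(3)[OF assms(2), of b] assms(3,4) by simp
  show "\<forall>m\<in>{1..b}. \<forall>c1\<in>children ((par ^^ m) ((par ^^ (a - b)) v1)).
      \<forall>c2\<in>children ((par ^^ m) ((par ^^ (a - b)) v1)). True \<longrightarrow> True \<longrightarrow> c1 = c2"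
  proof
    fix m assume "m \<in> {1..b}"
    then have "m + (a - b) \<le> k" using assms(3,4) by (simp add: atLeastAtMost_iff) linarith
    then have "card (children ((par ^^ (m + (a - b))) v1)) = 1"
      using chain_starts_ancestor(2)[OF assms(1)] by blast
    then show "\<forall>c1\<in>children ((par ^^ m) ((par ^^ (a - b)) v1)).
      \<forall>c2\<in>children ((par ^^ m) ((par ^^ (a - b)) v1)). True \<longrightarrow> True \<longrightarrow> c1 = c2"
      unfolding funpow_apply_add by (metis card_1_singletonE singletonD)
  qed
qed simp

lemma disjoint_chains:
  assumes "v1 \<in> chain_starts" "v2 \<in> chain_starts" "v1 \<noteq> v2"
    and "dep v1 mod Suc k = dep v2 mod Suc k"
  shows "set (ancestor_path v1 k) \<inter> set (ancestor_path v2 k) = {}"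
proof -
  have "(par ^^ a) v1 \<noteq> (par ^^ b) v2" if ab: "a \<le> k" "b \<le> k" for a b
  proof
    assume meet: "(par ^^ a) v1 = (par ^^ b) v2"
    have "v1 \<in> V" "v2 \<in> V" using chain_starts_subset_V assms(1,2) by auto
    show False
    proof (cases "b \<le> a")
      case True
      from chain_starts_meet[OF assms(1,2) True ab(1) meet] have "(par ^^ (a - b)) v1 = v2" .
      then have "dep v2 = dep v1 - (a - b)" using dep_funpow_par[OF \<open>v1 \<in> V\<close>] by blast
      then have "a - b = 0"
        using assms(4) ab(1) chain_starts_ancestor(3)[OF assms(1) ab(1)]
        by (intro eq_0_if_mod_eq_diff[of _ "Suc k" "dep v1"]) simp_all
      then show False using \<open>(par ^^ (a - b)) v1 = v2\<close> assms(3) by simp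
    next
      case False
      then have "(par ^^ (b - a)) v2 = v1" using chain_starts_meet[OF assms(2,1) _ ab(2) meet[symmetric]] by simp
      then have "dep v1 = dep v2 - (b - a)" using dep_funpow_par[OF \<open>v2 \<in> V\<close>] by blast
      then have "b - a = 0"
        using assms(4) ab(2) chain_starts_ancestor(3)[OF assms(2) ab(2)]
        by (intro eq_0_if_mod_eq_diff[of _ "Suc k" "dep v2"]) simp_all
      then show False using False by simp
    qed
  qed
  then show ?thesis unfolding set_ancestor_path by auto
qed

lemma many_bare_paths:
  "\<exists>P. finite P \<and> (\<forall>p\<in>P. bare_path V E p \<and> path_len p = k)
     \<and> (\<forall>p\<in>P. \<forall>q\<in>P. p \<noteq> q \<longrightarrow> set p \<inter> set q = {}) \<and> card chain_starts \<le> (k + 1) * card P"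
proof -
  have "finite chain_starts" using finite_V unfolding chain_starts_def by simp
  then obtain c where c: "card chain_starts \<le> Suc k * card {v \<in> chain_starts. dep v mod Suc k = c}"
    using exists_large_residue_class[of chain_starts "Suc k" dep] by blast
  define S where "S = {v \<in> chain_starts. dep v mod Suc k = c}"
  define P where "P = (\<lambda>v. ancestor_path v k) ` S"
  have "inj_on (\<lambda>v. ancestor_path v k) S"
  proof (rule inj_onI)
    fix v w assume "ancestor_path v k = ancestor_path w k"
    then show "v = w" using hd_ancestor_path by metis
  qed
  then have "card P = card S" unfolding P_def by (rule card_image)
  moreover have "finite P" using \<open>finite chain_starts\<close> unfolding P_def S_def by simp
  moreover have "\<forall>p\<in>P. bare_path V E p \<and> path_len p = k"
    unfolding P_def S_def using bare_path_ancestor_path by auto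
  moreover have "\<forall>p\<in>P. \<forall>q\<in>P. p \<noteq> q \<longrightarrow> set p \<inter> set q = {}"
  proof (intro ballI impI)
    fix p q assume "p \<in> P" "q \<in> P" "p \<noteq> q"
    then obtain v w where "v \<in> S" "w \<in> S" "p = ancestor_path v k" "q = ancestor_path w k" "v \<noteq> w"
      unfolding P_def by auto
    then show "set p \<inter> set q = {}" using disjoint_chains unfolding S_def by simp
  qed
  ultimately show ?thesis using c unfolding S_def by (intro exI[of _ P]) simp
qed

end

lemma fraction_bound_from_counts:
  fixes n k d l q y p :: nat
  assumes count: "n \<le> 2 * d * l + y + (2 * k + 8 * d) * q" and "y \<le> (k + 1) * p"
    and leaves: "real l \<le> real n / (5 * real d)" and small: "real q < real n / (40 * real k)"
    and "1 \<le> d" "4 * d \<le> k"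
  shows "real n / (40 * real k) \<le> real p"
proof -
  have "0 < real d" "0 < real k" using assms(5,6) by simp_all
  have "real (5 * (d * l)) \<le> real n" using leaves \<open>0 < real d\<close> by (simp add: pos_le_divide_eq mult_ac)
  moreover have "real (40 * (k * q)) < real n" using small \<open>0 < real k\<close> by (simp add: pos_less_divide_eq mult_ac)
  ultimately have "5 * (d * l) \<le> n" "40 * (k * q) < n" by (simp_all only: of_nat_le_iff of_nat_less_iff)
  moreover have "4 * (d * q) \<le> k * q" "p \<le> k * p"
    using assms(5,6) mult_le_mono1[of "4 * d" k q] by simp_all
  moreover have "n \<le> 2 * (d * l) + y + 2 * (k * q) + 8 * (d * q)" "y \<le> k * p + p"
    using count assms(2) by (simp_all add: algebra_simps)
  ultimately have "n \<le> 40 * (k * p)" by linarith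
  then have "real n \<le> real (40 * (k * p))" by (simp only: of_nat_le_iff)
  then show ?thesis using \<open>0 < real k\<close> by (simp add: pos_divide_le_eq mult_ac)
qed

theorem lemma3p16:
  fixes V :: "'a set" and E :: "'a set set" and n k d :: nat
  assumes "d \<ge> 1"
    and "n \<ge> 60 * k" and "k \<ge> 4 * d"
    and "tree V E" and "card V = n"
    and "real (card (leaves V E)) \<le> real n / (5 * real d)"
  shows "(\<exists>Q \<subseteq> leaves V E. separated V E (2 * d) Q \<and> real (card Q) \<ge> real n / (40 * real k))
       \<or> (\<exists>P. finite P \<and> (\<forall>p\<in>P. bare_path V E p \<and> path_len p = k)
              \<and> (\<forall>p\<in>P. \<forall>q\<in>P. p \<noteq> q \<longrightarrow> set p \<inter> set q = {})
              \<and> real (card P) \<ge> real n / (40 * real k))"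
proof -
  obtain r where r: "r \<in> leaves V E" using tree_has_leaf[OF assms(4)] assms(1-3,5) by fastforce
  then obtain par dep where "rooted_tree V E r par dep"
    using rooted_tree_exists[OF assms(4)] unfolding leaves_def by blast
  then interpret rooted_tree V E r par dep .
  obtain Q where Q: "Q \<subseteq> leaves V E" "Q \<noteq> {}" "separated V E (2 * d) Q"
    "\<forall>l\<in>leaves V E - Q. \<exists>q\<in>Q. tdist l q < 2 * d"
    using exists_separated_leaf_net[of "2 * d"] assms(4) r unfolding tree_def by blast
  interpret leaf_net V E r par dep Q d k
    by unfold_locales (use r Q assms(1) in auto)
  show ?thesis
  proof (cases "real n / (40 * real k) \<le> real (card Q)")
    case False
    obtain P where "finite P" "\<forall>p\<in>P. bare_path V E p \<and> path_len p = k"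
      "\<forall>p\<in>P. \<forall>q\<in>P. p \<noteq> q \<longrightarrow> set p \<inter> set q = {}" "card chain_starts \<le> (k + 1) * card P"
      using many_bare_paths by blast
    moreover have "real n / (40 * real k) \<le> real (card P)"
      using fraction_bound_from_counts[OF card_V_le[unfolded assms(5)] \<open>card chain_starts \<le> _\<close> assms(6)]
        False assms(1,3) by simp
    ultimately show ?thesis by blast
  qed (use Q in blast)
qed

end
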